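(* Let $X$ be a complex Banach space and let $T\in\mathcal{B}(X)$ be a power-bounded operator such that $\sigma(T)\cap\mathbb{T}=\{1\}$. Then either $$\limsup_{n\to\infty} n\|T^n(I-T)\|>0,$$ or there exist closed $T$-invariant subspaces $X_0$ and $X_1$ of $X$ such that $X_0\subset\mathrm{Fix}(T)$, the restriction $T_1$ of $T$ to $X_1$ satisfies $r(T_1)<1$, and $X=X_0\oplus X_1$.
   Context: $\mathcal{B}(X)$ denotes the bounded linear operators on $X$; $T$ is power-bounded if $\sup_{n\geq0}\|T^n\|<\infty$. $\mathbb{T}=\{\lambda\in\mathbb{C}:|\lambda|=1\}$, $\sigma(T)$ is the spectrum, $r(\cdot)$ the spectral radius, and $\mathrm{Fix}(T)=\mathrm{Ker}(I-T)$. *)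

theory Defs
  imports "HOL-Analysis.Analysis"
begin

class complex_vector = real_vector +
  fixes scaleC :: "complex \<Rightarrow> 'a \<Rightarrow> 'a" (infixr \<open>*\<^sub>C\<close> 75)
  assumes scaleC_add_right: "a *\<^sub>C (x + y) = a *\<^sub>C x + a *\<^sub>C y"
    and scaleC_add_left: "(a + b) *\<^sub>C x = a *\<^sub>C x + b *\<^sub>C x"
    and scaleC_scaleC: "a *\<^sub>C (b *\<^sub>C x) = (a * b) *\<^sub>C x"
    and scaleC_one: "1 *\<^sub>C x = x"
    and scaleR_scaleC: "scaleR r x = complex_of_real r *\<^sub>C x"

class complex_normed_vector = complex_vector + real_normed_vector +
  assumes norm_scaleC: "norm (a *\<^sub>C x) = cmod a * norm x"

definition bounded_clinear :: "('a::complex_normed_vector \<Rightarrow> 'b::complex_normed_vector) \<Rightarrow> bool" where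
  "bounded_clinear T \<longleftrightarrow> bounded_linear T \<and> (\<forall>c x. T (c *\<^sub>C x) = c *\<^sub>C T x)"

definition power_bounded :: "('a::complex_normed_vector \<Rightarrow> 'a) \<Rightarrow> bool" where
  "power_bounded T \<longleftrightarrow> (\<exists>M. \<forall>n. onorm (T ^^ n) \<le> M)"

definition csubspace :: "'a::complex_vector set \<Rightarrow> bool" where
  "csubspace Y \<longleftrightarrow> 0 \<in> Y \<and> (\<forall>x\<in>Y. \<forall>y\<in>Y. x + y \<in> Y) \<and> (\<forall>c. \<forall>x\<in>Y. c *\<^sub>C x \<in> Y)"

definition Fix :: "('a \<Rightarrow> 'a) \<Rightarrow> 'a set" where
  "Fix T = {x. T x = x}"

text \<open>Spectrum of the restriction of T to an invariant subspace Y: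
  \<lambda> is in the resolvent set iff \<lambda>I - T restricted to Y is a bijection of Y
  with a bounded inverse.\<close>
definition spectrum_on :: "'a::complex_normed_vector set \<Rightarrow> ('a \<Rightarrow> 'a) \<Rightarrow> complex set" where
  "spectrum_on Y T = {l. \<not> (\<exists>S. (\<forall>y\<in>Y. S y \<in> Y \<and> S (l *\<^sub>C y - T y) = y \<and> l *\<^sub>C S y - T (S y) = y)
        \<and> (\<exists>K. \<forall>y\<in>Y. norm (S y) \<le> K * norm y))}"

abbreviation spectrum :: "('a::complex_normed_vector \<Rightarrow> 'a) \<Rightarrow> complex set" where
  "spectrum T \<equiv> spectrum_on UNIV T"

text \<open>Spectral radius of the restriction; by convention 0 when the spectrum is empty
  (only possible for the zero space).\<close>
definition spectral_radius_on :: "'a::complex_normed_vector set \<Rightarrow> ('a \<Rightarrow> 'a) \<Rightarrow> real" where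
  "spectral_radius_on Y T = (if spectrum_on Y T = {} then 0 else Sup (cmod ` spectrum_on Y T))"

end

theory Submission
  imports Defs
begin

text \<open>Put \<open>a n = \<parallel>T\<^sup>n (I - T)\<parallel>\<close> and assume \<open>n a n \<rightarrow> 0\<close>. Telescoping gives
  \<open>a m \<le> a N + \<Sum>\<^sub>m\<^sub>\<le>\<^sub>j\<^sub><\<^sub>N a \<lfloor>j/2\<rfloor> a \<lceil>j/2\<rceil>\<close>, so a bound \<open>n a n \<le> \<delta>\<close> from some index on improves
  to \<open>n a n \<le> 8 \<delta>\<^sup>2\<close> from twice that index on; iterating, \<open>a n\<close> decays geometrically.
  Then \<open>R x = \<Sum>\<^sub>n T\<^sup>n (x - T x)\<close> converges, \<open>R\<close> is a bounded projection commuting with \<open>T\<close>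
  whose kernel is \<open>Fix T\<close>, and \<open>T\<^sup>k x \<rightarrow> x - R x\<close> geometrically. On the range of \<open>R\<close> the powers
  \<open>T\<^sup>k\<close> therefore decay geometrically, and a Neumann series bounds the spectrum there.\<close>

lemma sum_inverse_consecutive_products:
  assumes "2 \<le> m" "m \<le> N"
  shows "(\<Sum>j=m..<N. 1 / (real j * (real j - 1))) = 1 / (real m - 1) - 1 / (real N - 1)"
  using assms(2)
proof (induction N rule: dec_induct)
  case (step n)
  have "real n \<ge> 2" using assms(1) step by simp
  then have "1 / (real n - 1) - 1 / (real (Suc n) - 1) = 1 / (real n * (real n - 1))"
    by (simp add: field_simps)
  with step show ?case by simp
qed simp

lemma product_of_halves_le:
  fixes a :: "nat \<Rightarrow> real"
  assumes nonneg: "\<And>m. 0 \<le> a m" and bound: "\<forall>m\<ge>n. real m * a m \<le> \<delta>"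
    and "1 \<le> n" "2 * n \<le> j"
  shows "a (j div 2) * a (j - j div 2) \<le> 4 * \<delta>^2 / (real j * (real j - 1))"
proof -
  define h k where "h = j div 2" and "k = j - j div 2"
  have hk: "n \<le> h" "n \<le> k" "k = h \<or> k = h + 1" "real j = real h + real k"
    using assms(4) by (auto simp: h_def k_def)
  have pos: "0 < real h" "0 < real k" using hk assms(3) by auto
  have ah: "a h \<le> \<delta> / real h" and ak: "a k \<le> \<delta> / real k"
    using bound hk pos by (auto simp: pos_le_divide_eq mult.commute)
  have "0 \<le> a h" by (rule nonneg)
  with ah pos have "0 \<le> \<delta> / real h" by linarith
  with ah ak have "a h * a k \<le> (\<delta> / real h) * (\<delta> / real k)"
    by (intro mult_mono) (auto simp: nonneg)
  also have "\<dots> = 4 * \<delta>^2 / (4 * (real h * real k))" by (simp add: power2_eq_square)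
  also have "\<dots> \<le> 4 * \<delta>^2 / (real j * (real j - 1))"
  proof (rule divide_left_mono)
    show "real j * (real j - 1) \<le> 4 * (real h * real k)"
      using hk(3,4) by (auto simp: algebra_simps)
  qed (use pos hk(4) in auto)
  finally show ?thesis by (simp add: h_def k_def)
qed

lemma squared_bound_from_tail:
  fixes a :: "nat \<Rightarrow> real"
  assumes nonneg: "\<And>m. 0 \<le> a m"
    and tail: "\<And>m N. m \<le> N \<Longrightarrow> a m \<le> a N + (\<Sum>j=m..<N. a (j div 2) * a (j - j div 2))"
    and bound: "\<forall>m\<ge>n. real m * a m \<le> \<delta>" and "1 \<le> n" "2 * n \<le> m"
  shows "real m * a m \<le> 8 * \<delta>^2"
proof -
  have m2: "2 \<le> real m" using assms(4,5) by simp
  have "a m \<le> \<delta> / real N + 4 * \<delta>^2 / (real m - 1)" if "m \<le> N" for N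
  proof -
    have "a N \<le> \<delta> / real N"
      using bound that assms(5) m2 by (simp add: pos_le_divide_eq mult.commute)
    moreover have "(\<Sum>j=m..<N. a (j div 2) * a (j - j div 2))
        \<le> (\<Sum>j=m..<N. 4 * \<delta>^2 * (1 / (real j * (real j - 1))))"
      using product_of_halves_le[OF nonneg bound \<open>1 \<le> n\<close>] assms(5) by (intro sum_mono) auto
    moreover have "\<dots> = 4 * \<delta>^2 * (1 / (real m - 1) - 1 / (real N - 1))"
      by (subst sum_distrib_left[symmetric]) (use sum_inverse_consecutive_products that m2 in simp)
    moreover have "\<dots> \<le> 4 * \<delta>^2 * (1 / (real m - 1))"
      using that m2 by (intro mult_left_mono) auto
    ultimately show ?thesis using tail[OF that] by simp
  qed
  moreover have "(\<lambda>N. \<delta> / real N + 4 * \<delta>^2 / (real m - 1)) \<longlonglongrightarrow> 4 * \<delta>^2 / (real m - 1)"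
    using tendsto_add[OF lim_const_over_n[of \<delta>] tendsto_const] by simp
  ultimately have "a m \<le> 4 * \<delta>^2 / (real m - 1)"
    by (intro LIMSEQ_le_const) auto
  then have "real m * a m \<le> real m * (4 * \<delta>^2 / (real m - 1))"
    using m2 by (intro mult_left_mono) auto
  also have "\<dots> = 4 * \<delta>^2 * (real m / (real m - 1))" by simp
  also have "\<dots> \<le> 4 * \<delta>^2 * 2"
    using m2 by (intro mult_left_mono) (auto simp: divide_le_eq)
  finally show ?thesis by simp
qed

lemma dyadic_block:
  fixes m n :: nat
  assumes "1 \<le> n" "n \<le> m"
  obtains k where "2^k * n \<le> m" "m < 2^Suc k * n"
proof -
  have "\<exists>k. 2^k * n \<le> m \<and> m < 2^Suc k * n"
    using assms(2)
  proof (induction m rule: dec_induct)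
    case (step m)
    then obtain k where k: "2^k * n \<le> m" "m < 2^Suc k * n" by blast
    show ?case
    proof (cases "Suc m < 2^Suc k * n")
      case True
      with k show ?thesis by (intro exI[of _ k]) simp
    next
      case False
      with k have "Suc m = 2^Suc k * n" by simp
      then show ?thesis using assms(1) by (intro exI[of _ "Suc k"]) simp
    qed
  qed (use assms(1) in \<open>intro exI[of _ 0], simp\<close>)
  then show ?thesis using that by blast
qed

text \<open>Iterated squaring gives \<open>a m \<le> 2^(-2^k) \<le> 2^(-m/(2n))\<close> on the dyadic block
  \<open>2^k n \<le> m < 2^(k+1) n\<close>; this is where the rate \<open>root (2 n) (1/2)\<close> comes from.\<close>
lemma geometric_decay_from_tail:
  fixes a :: "nat \<Rightarrow> real"
  assumes nonneg: "\<And>m. 0 \<le> a m"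
    and tail: "\<And>m N. m \<le> N \<Longrightarrow> a m \<le> a N + (\<Sum>j=m..<N. a (j div 2) * a (j - j div 2))"
    and "1 \<le> n" "\<forall>m\<ge>n. real m * a m \<le> 1/16"
  shows "\<forall>m\<ge>n. a m \<le> root (2 * n) (1/2) ^ m"
proof (intro allI impI)
  have block: "\<forall>m\<ge>2^k * n. real m * a m \<le> 1/8 * (1/2)^(2^k)" for k
  proof (induction k)
    case (Suc k)
    have square: "8 * (1/8 * (1/2::real)^(2^k))^2 = 1/8 * (1/2)^(2^Suc k)"
      by (simp add: power_mult_distrib power2_eq_square mult_2 power_add)
    show ?case
    proof (intro allI impI)
      fix m assume "2^Suc k * n \<le> m"
      then have "real m * a m \<le> 8 * (1/8 * (1/2)^(2^k))^2"
        using \<open>1 \<le> n\<close> by (intro squared_bound_from_tail[OF nonneg tail Suc]) auto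
      then show "real m * a m \<le> 1/8 * (1/2)^(2^Suc k)" by (simp only: square)
    qed
  qed (use assms(4) in simp)
  fix m assume "n \<le> m"
  then obtain k where k: "2^k * n \<le> m" "m < 2^Suc k * n"
    using dyadic_block \<open>1 \<le> n\<close> by blast
  define \<rho> where "\<rho> = root (2 * n) (1/2)"
  have \<rho>: "0 \<le> \<rho>" "\<rho> \<le> 1" "\<rho>^(2 * n) = 1/2" using \<open>1 \<le> n\<close> by (auto simp: \<rho>_def)
  have "a m \<le> real m * a m"
    using \<open>n \<le> m\<close> \<open>1 \<le> n\<close> nonneg[of m] by (simp add: mult_le_cancel_right1)
  also have "\<dots> \<le> 1/8 * (1/2)^(2^k)" using block k(1) by blast
  also have "\<dots> \<le> (1/2)^(2^k)" by simp
  also have "\<dots> = \<rho>^(2 * n * 2^k)" using power_mult[of \<rho> "2 * n" "2^k"] \<rho>(3) by simp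
  also have "\<dots> \<le> \<rho>^m"
    using k(2) \<rho> by (intro power_decreasing) (auto simp: mult.commute mult.left_commute)
  finally show "a m \<le> root (2 * n) (1/2) ^ m" by (simp add: \<rho>_def)
qed

lemma geometric_bound_from_eventual:
  fixes a :: "nat \<Rightarrow> real"
  assumes "0 < q" "\<forall>m\<ge>n. a m \<le> q^m"
  obtains D where "\<And>m. a m \<le> D * q^m"
proof -
  define D where "D = max 1 (Max ((\<lambda>j. a j / q^j) ` {..<n}))"
  have "1 \<le> D" by (simp add: D_def)
  have "a m \<le> D * q^m" for m
  proof (cases "n \<le> m")
    case True
    then have "a m \<le> 1 * q^m" using assms(2) by simp
    also have "\<dots> \<le> D * q^m" using \<open>1 \<le> D\<close> assms(1) by (intro mult_right_mono) auto
    finally show ?thesis .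
  next
    case False
    then have "a m / q^m \<le> Max ((\<lambda>j. a j / q^j) ` {..<n})" by (intro Max_ge) auto
    also have "\<dots> \<le> D" by (simp add: D_def)
    finally show ?thesis using assms(1) by (simp add: pos_divide_le_eq)
  qed
  then show ?thesis by (rule that)
qed

lemma tendsto_zero_if_limsup_nonpos:
  fixes f :: "nat \<Rightarrow> real"
  assumes "\<And>n. 0 \<le> f n" "limsup (\<lambda>n. ereal (f n)) \<le> 0"
  shows "f \<longlonglongrightarrow> 0"
proof -
  have "0 \<le> liminf (\<lambda>n. ereal (f n))" by (rule Liminf_bounded) (simp add: assms(1))
  moreover have "liminf (\<lambda>n. ereal (f n)) \<le> limsup (\<lambda>n. ereal (f n))"
    by (rule Liminf_le_Limsup) simp
  ultimately have "liminf (\<lambda>n. ereal (f n)) = 0" "limsup (\<lambda>n. ereal (f n)) = 0" using assms(2) by auto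
  then have "((\<lambda>n. ereal (f n)) \<longlongrightarrow> 0) sequentially" by (intro Liminf_eq_Limsup) auto
  then show ?thesis by (simp add: zero_ereal_def)
qed

lemma bounded_linear_scaleC_right: "bounded_linear (\<lambda>x::'a::complex_normed_vector. c *\<^sub>C x)"
proof (rule bounded_linear_intro[where K="cmod c"])
  show "c *\<^sub>C (x + y) = c *\<^sub>C x + c *\<^sub>C y" for x y :: 'a by (rule scaleC_add_right)
  show "c *\<^sub>C (r *\<^sub>R x) = r *\<^sub>R (c *\<^sub>C x)" for r and x :: 'a
    by (simp add: scaleR_scaleC scaleC_scaleC mult.commute)
  show "norm (c *\<^sub>C x) \<le> norm x * cmod c" for x :: 'a by (simp add: norm_scaleC mult.commute)
qed

lemma scaleC_diff_right: "c *\<^sub>C (x - y) = c *\<^sub>C x - c *\<^sub>C (y::'a::complex_normed_vector)"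
  by (rule linear_diff[OF bounded_linear.linear[OF bounded_linear_scaleC_right]])

lemma suminf_scaleC:
  "summable f \<Longrightarrow> (\<Sum>n. c *\<^sub>C f n) = c *\<^sub>C suminf (f :: nat \<Rightarrow> 'a::{complex_normed_vector,banach})"
  by (rule bounded_linear.suminf[OF bounded_linear_scaleC_right, symmetric])

lemma bounded_clinear_linear: "bounded_clinear T \<Longrightarrow> bounded_linear T"
  by (simp add: bounded_clinear_def)

lemma bounded_clinear_scaleC: "bounded_clinear T \<Longrightarrow> T (c *\<^sub>C x) = c *\<^sub>C T x"
  by (simp add: bounded_clinear_def)

lemma bounded_clinear_compose:
  "bounded_clinear S \<Longrightarrow> bounded_clinear T \<Longrightarrow> bounded_clinear (S \<circ> T)"
  by (simp add: bounded_clinear_def comp_def bounded_linear_compose)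

lemma bounded_clinear_funpow:
  fixes T :: "'a::complex_normed_vector \<Rightarrow> 'a"
  assumes "bounded_clinear T"
  shows "bounded_clinear (T ^^ n)"
proof (induction n)
  case 0
  show ?case by (simp add: bounded_clinear_def id_def)
next
  case (Suc n)
  show ?case using bounded_clinear_compose[OF assms Suc] by (simp only: funpow.simps(2))
qed

lemma csubspace_scaleC: "csubspace Y \<Longrightarrow> x \<in> Y \<Longrightarrow> c *\<^sub>C x \<in> Y"
  by (simp add: csubspace_def)

lemma csubspace_sum: "csubspace Y \<Longrightarrow> (\<And>i. i \<in> I \<Longrightarrow> f i \<in> Y) \<Longrightarrow> sum f I \<in> Y"
  by (induction I rule: infinite_finite_induct) (auto simp: csubspace_def)

lemma csubspace_suminf:
  fixes f :: "nat \<Rightarrow> 'a::complex_normed_vector"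
  assumes "csubspace Y" "closed Y" "summable f" "\<And>n. f n \<in> Y"
  shows "suminf f \<in> Y"
proof (rule Lim_in_closed_set[OF assms(2) _ _ summable_LIMSEQ[OF assms(3)]])
  show "\<forall>\<^sub>F n in sequentially. (\<Sum>i<n. f i) \<in> Y"
    by (intro always_eventually allI csubspace_sum[OF assms(1)] assms(4))
qed simp

locale bounded_clinear_operator =
  fixes T :: "'a::{complex_normed_vector,banach} \<Rightarrow> 'a"
  assumes bounded_clinear: "bounded_clinear T"
begin

lemma bounded_linear: "bounded_linear T"
  by (rule bounded_clinear_linear[OF bounded_clinear])

lemma bounded_linear_pow: "bounded_linear (T ^^ n)"
  by (rule bounded_clinear_linear[OF bounded_clinear_funpow[OF bounded_clinear]])

lemma scaleC: "T (c *\<^sub>C x) = c *\<^sub>C T x"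
  by (rule bounded_clinear_scaleC[OF bounded_clinear])

lemma pow_scaleC: "(T ^^ n) (c *\<^sub>C x) = c *\<^sub>C (T ^^ n) x"
  by (rule bounded_clinear_scaleC[OF bounded_clinear_funpow[OF bounded_clinear]])

lemma pow_diff: "(T ^^ n) (x - y) = (T ^^ n) x - (T ^^ n) y"
  by (rule linear_diff[OF bounded_linear.linear[OF bounded_linear_pow]])

lemma pow_add: "(T ^^ n) (x + y) = (T ^^ n) x + (T ^^ n) y"
  by (rule linear_add[OF bounded_linear.linear[OF bounded_linear_pow]])

lemma T_neumann_term: "l * w = 1 \<Longrightarrow> T (w^k *\<^sub>C (T ^^ k) y) = l *\<^sub>C (w^Suc k *\<^sub>C (T ^^ Suc k) y)"
  by (simp add: scaleC scaleC_scaleC mult.assoc[symmetric])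

lemma neumann_term_diff:
  assumes "l * w = 1"
  shows "w^k *\<^sub>C (T ^^ k) (l *\<^sub>C y - T y)
    = l *\<^sub>C (w^k *\<^sub>C (T ^^ k) y) - l *\<^sub>C (w^Suc k *\<^sub>C (T ^^ Suc k) y)"
proof -
  have "w^k *\<^sub>C (T ^^ k) (l *\<^sub>C y - T y) = l *\<^sub>C (w^k *\<^sub>C (T ^^ k) y) - w^k *\<^sub>C T ((T ^^ k) y)"
    by (simp add: pow_diff pow_scaleC scaleC_diff_right scaleC_scaleC mult.commute funpow_swap1)
  then show ?thesis using T_neumann_term[OF assms] by (simp add: scaleC)
qed

lemma suminf_neumann_tail:
  assumes "summable (\<lambda>k. w^k *\<^sub>C (T ^^ k) y)"
  shows "(\<Sum>k. l *\<^sub>C (w^Suc k *\<^sub>C (T ^^ Suc k) y)) = l *\<^sub>C ((\<Sum>k. w^k *\<^sub>C (T ^^ k) y) - y)"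
proof -
  have "(\<Sum>k. w^Suc k *\<^sub>C (T ^^ Suc k) y) = (\<Sum>k. w^k *\<^sub>C (T ^^ k) y) - y"
    using suminf_split_head[OF assms] by (simp add: scaleC_one)
  moreover have "summable (\<lambda>k. w^Suc k *\<^sub>C (T ^^ Suc k) y)"
    using assms by (subst summable_Suc_iff)
  ultimately show ?thesis by (simp add: suminf_scaleC)
qed

lemma T_neumann_sum:
  assumes "l * w = 1" "summable (\<lambda>k. w^k *\<^sub>C (T ^^ k) y)"
  shows "T (\<Sum>k. w^k *\<^sub>C (T ^^ k) y) = l *\<^sub>C ((\<Sum>k. w^k *\<^sub>C (T ^^ k) y) - y)"
proof -
  have "T (\<Sum>k. w^k *\<^sub>C (T ^^ k) y) = (\<Sum>k. T (w^k *\<^sub>C (T ^^ k) y))"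
    by (rule bounded_linear.suminf[OF bounded_linear assms(2)])
  also have "\<dots> = (\<Sum>k. l *\<^sub>C (w^Suc k *\<^sub>C (T ^^ Suc k) y))"
    by (simp only: T_neumann_term[OF assms(1)])
  finally show ?thesis by (simp only: suminf_neumann_tail[OF assms(2)])
qed

lemma neumann_sum_resolvent:
  assumes "l * w = 1" "summable (\<lambda>k. w^k *\<^sub>C (T ^^ k) y)"
  shows "(\<Sum>k. w^k *\<^sub>C (T ^^ k) (l *\<^sub>C y - T y)) = l *\<^sub>C y"
proof -
  have "summable (\<lambda>k. l *\<^sub>C (w^k *\<^sub>C (T ^^ k) y))"
    "summable (\<lambda>k. l *\<^sub>C (w^Suc k *\<^sub>C (T ^^ Suc k) y))"
    using assms(2) bounded_linear.summable[OF bounded_linear_scaleC_right]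
    by (auto simp only: summable_Suc_iff[of "\<lambda>k. l *\<^sub>C (w^k *\<^sub>C (T ^^ k) y)"])
  then have "(\<Sum>k. w^k *\<^sub>C (T ^^ k) (l *\<^sub>C y - T y))
      = (\<Sum>k. l *\<^sub>C (w^k *\<^sub>C (T ^^ k) y)) - (\<Sum>k. l *\<^sub>C (w^Suc k *\<^sub>C (T ^^ Suc k) y))"
    unfolding neumann_term_diff[OF assms(1)] by (rule suminf_diff[symmetric])
  also have "\<dots> = l *\<^sub>C y"
    using suminf_scaleC[OF assms(2)] suminf_neumann_tail[OF assms(2)] by (simp add: scaleC_diff_right)
  finally show ?thesis .
qed

text \<open>Outside the disc of radius \<open>q\<close> the Neumann series \<open>(l - T)\<^sup>-\<^sup>1 = \<Sum>\<^sub>k T\<^sup>k / l\<^sup>k\<^sup>+\<^sup>1\<close>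
  converges on \<open>Y\<close>, because \<open>T\<^sup>k\<close> decays like \<open>q\<^sup>k\<close> there.\<close>
lemma not_in_spectrum_on_if_decay:
  assumes Y: "csubspace Y" "closed Y" "T ` Y \<subseteq> Y"
    and decay: "\<And>y k. y \<in> Y \<Longrightarrow> norm ((T ^^ k) y) \<le> C * q^k * norm y"
    and "0 \<le> q" "q < cmod l"
  shows "l \<notin> spectrum_on Y T"
proof -
  define w where "w = 1 / l"
  have lw: "l * w = 1" using assms(5,6) by (auto simp: w_def)
  define r where "r = cmod w * q"
  have r: "0 \<le> r" "r < 1" using assms(5,6) by (auto simp: r_def w_def norm_divide divide_less_eq)
  have term_bound: "norm (w^k *\<^sub>C (T ^^ k) y) \<le> C * norm y * r^k" if "y \<in> Y" for y k
  proof -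
    have "norm (w^k *\<^sub>C (T ^^ k) y) = cmod w ^ k * norm ((T ^^ k) y)" by (simp add: norm_scaleC norm_power)
    also have "\<dots> \<le> cmod w ^ k * (C * q^k * norm y)" by (intro mult_left_mono decay that) simp
    also have "\<dots> = C * norm y * r^k" by (simp add: r_def power_mult_distrib)
    finally show ?thesis .
  qed
  have geometric: "summable (\<lambda>k. c * r^k)" for c
    using r by (intro summable_mult summable_geometric) simp
  have summable: "summable (\<lambda>k. w^k *\<^sub>C (T ^^ k) y)" if "y \<in> Y" for y
    using summable_comparison_test'[OF geometric term_bound[OF that]] .
  define S where "S y = w *\<^sub>C (\<Sum>k. w^k *\<^sub>C (T ^^ k) y)" for y
  have "S y \<in> Y \<and> S (l *\<^sub>C y - T y) = y \<and> l *\<^sub>C S y - T (S y) = y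
      \<and> norm (S y) \<le> cmod w * C / (1 - r) * norm y" if y: "y \<in> Y" for y
  proof (intro conjI)
    have "(T ^^ k) y \<in> Y" for k using y Y(3) by (induction k) auto
    then show "S y \<in> Y" unfolding S_def
      by (intro csubspace_scaleC[OF Y(1)] csubspace_suminf[OF Y(1,2) summable[OF y]])
  next
    show "S (l *\<^sub>C y - T y) = y"
      by (simp add: S_def neumann_sum_resolvent[OF lw summable[OF y]] scaleC_scaleC mult.commute lw scaleC_one)
  next
    show "l *\<^sub>C S y - T (S y) = y"
      by (simp add: S_def scaleC T_neumann_sum[OF lw summable[OF y]] scaleC_scaleC scaleC_diff_right
          mult.commute[of w l] lw scaleC_one)
  next
    have "norm (\<Sum>k. w^k *\<^sub>C (T ^^ k) y) \<le> (\<Sum>k. C * norm y * r^k)"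
      by (rule norm_suminf_le[OF term_bound[OF y] geometric])
    also have "\<dots> = C * norm y / (1 - r)" using r by (simp add: suminf_mult suminf_geometric)
    finally have "cmod w * norm (\<Sum>k. w^k *\<^sub>C (T ^^ k) y) \<le> cmod w * (C * norm y / (1 - r))"
      by (rule mult_left_mono) simp
    then show "norm (S y) \<le> cmod w * C / (1 - r) * norm y" by (simp add: S_def norm_scaleC)
  qed
  then show ?thesis unfolding spectrum_on_def by blast
qed

lemma spectral_radius_on_le_decay_rate:
  assumes "csubspace Y" "closed Y" "T ` Y \<subseteq> Y"
    and "\<And>y k. y \<in> Y \<Longrightarrow> norm ((T ^^ k) y) \<le> C * q^k * norm y" and "0 \<le> q"
  shows "spectral_radius_on Y T \<le> q"
proof -
  have "cmod l \<le> q" if "l \<in> spectrum_on Y T" for l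
    using not_in_spectrum_on_if_decay[OF assms, of l] that by linarith
  then show ?thesis using assms(5) by (auto simp: spectral_radius_on_def intro: cSup_least)
qed

lemma bounded_linear_pow_diff: "bounded_linear ((T ^^ n) \<circ> (\<lambda>x. x - T x))"
  using bounded_linear_compose[OF bounded_linear_pow bounded_linear_sub[OF bounded_linear_ident bounded_linear]]
  by (simp add: comp_def)

definition diff_norm :: "nat \<Rightarrow> real" where
  "diff_norm n = onorm ((T ^^ n) \<circ> (\<lambda>x. x - T x))"

lemma diff_norm_nonneg: "0 \<le> diff_norm n"
  unfolding diff_norm_def by (rule onorm_pos_le[OF bounded_linear_pow_diff])

lemma norm_pow_diff_le: "norm ((T ^^ n) (x - T x)) \<le> diff_norm n * norm x"
  using onorm[OF bounded_linear_pow_diff] by (simp add: diff_norm_def)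

lemma norm_pow_second_diff_le:
  "norm ((T ^^ (h + k)) ((x - T x) - T (x - T x))) \<le> diff_norm h * diff_norm k * norm x"
proof -
  define y where "y = (T ^^ k) (x - T x)"
  have "(T ^^ k) ((x - T x) - T (x - T x)) = y - T y"
    unfolding y_def pow_diff[of k "x - T x"] by (simp add: funpow_swap1)
  then have "(T ^^ (h + k)) ((x - T x) - T (x - T x)) = (T ^^ h) (y - T y)"
    by (simp add: funpow_add)
  then have "norm ((T ^^ (h + k)) ((x - T x) - T (x - T x))) \<le> diff_norm h * norm y"
    using norm_pow_diff_le by simp
  also have "\<dots> \<le> diff_norm h * (diff_norm k * norm x)"
    unfolding y_def by (intro mult_left_mono norm_pow_diff_le diff_norm_nonneg)
  finally show ?thesis by (simp add: mult.assoc)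
qed

lemma pow_telescope: "m \<le> N \<Longrightarrow> (T ^^ m) z - (T ^^ N) z = (\<Sum>j=m..<N. (T ^^ j) (z - T z))"
proof (induction N rule: dec_induct)
  case (step n)
  have "(T ^^ n) z - (T ^^ Suc n) z = (T ^^ n) (z - T z)" by (simp add: pow_diff funpow_swap1)
  with step show ?case by (simp add: algebra_simps)
qed simp

text \<open>\<open>T\<^sup>m (I - T) = T\<^sup>N (I - T) + \<Sum>\<^sub>m\<^sub>\<le>\<^sub>j\<^sub><\<^sub>N T\<^sup>j (I - T)\<^sup>2\<close>, and \<open>T\<^sup>j (I - T)\<^sup>2\<close> is split as the
  product of two factors \<open>T\<^sup>h (I - T)\<close> with \<open>h \<approx> j/2\<close>.\<close>
lemma diff_norm_tail:
  assumes "m \<le> N"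
  shows "diff_norm m \<le> diff_norm N + (\<Sum>j=m..<N. diff_norm (j div 2) * diff_norm (j - j div 2))"
  unfolding diff_norm_def[of m]
proof (rule onorm_bound)
  fix x
  define z where "z = x - T x"
  have "(T ^^ m) z = (T ^^ N) z + (\<Sum>j=m..<N. (T ^^ j) (z - T z))"
    using pow_telescope[OF assms, of z] by (simp add: algebra_simps)
  then have "norm ((T ^^ m) z) \<le> norm ((T ^^ N) z) + (\<Sum>j=m..<N. norm ((T ^^ j) (z - T z)))"
    by (metis norm_sum norm_triangle_le add_left_mono)
  also have "\<dots> \<le> diff_norm N * norm x + (\<Sum>j=m..<N. diff_norm (j div 2) * diff_norm (j - j div 2) * norm x)"
  proof (intro add_mono sum_mono)
    show "norm ((T ^^ N) z) \<le> diff_norm N * norm x" unfolding z_def by (rule norm_pow_diff_le)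
    show "norm ((T ^^ j) (z - T z)) \<le> diff_norm (j div 2) * diff_norm (j - j div 2) * norm x" for j
      using norm_pow_second_diff_le[of "j div 2" "j - j div 2" x] by (simp add: z_def)
  qed
  finally show "norm (((T ^^ m) \<circ> (\<lambda>x. x - T x)) x)
      \<le> (diff_norm N + (\<Sum>j=m..<N. diff_norm (j div 2) * diff_norm (j - j div 2))) * norm x"
    by (simp add: z_def algebra_simps sum_distrib_left sum_distrib_right)
qed (simp add: diff_norm_nonneg sum_nonneg)

lemma diff_norm_geometric:
  assumes "(\<lambda>n. real n * diff_norm n) \<longlonglongrightarrow> 0"
  obtains D q where "0 < q" "q < 1" "\<And>n. diff_norm n \<le> D * q^n"
proof -
  have "\<forall>\<^sub>F n in sequentially. real n * diff_norm n < 1/16"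
    by (rule order_tendstoD(2)[OF assms]) simp
  then obtain n0 where n0: "\<forall>m\<ge>n0. real m * diff_norm m < 1/16"
    unfolding eventually_sequentially by blast
  define n where "n = max 1 n0"
  have "1 \<le> n" "\<forall>m\<ge>n. real m * diff_norm m \<le> 1/16" using n0 by (auto simp: n_def less_imp_le)
  then have "\<forall>m\<ge>n. diff_norm m \<le> root (2 * n) (1/2) ^ m"
    by (intro geometric_decay_from_tail[OF diff_norm_nonneg diff_norm_tail])
  moreover have "0 < root (2 * n) (1/2)" "root (2 * n) (1/2) < 1" using \<open>1 \<le> n\<close> by auto
  ultimately show ?thesis using geometric_bound_from_eventual that by metis
qed

end

locale geometric_diff_decay = bounded_clinear_operator +
  fixes D q :: real
  assumes rate: "0 < q" "q < 1" and diff_norm_le: "\<And>n. diff_norm n \<le> D * q^n"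
begin

text \<open>Since the series telescopes, \<open>x - stable_proj x = lim T\<^sup>n x\<close>: this is the projection onto the
  part of the space on which the powers of \<open>T\<close> tend to zero, along \<open>Fix T\<close>.\<close>
definition stable_proj :: "'a \<Rightarrow> 'a" where
  "stable_proj x = (\<Sum>n. (T ^^ n) (x - T x))"

lemma norm_pow_diff_le_geometric: "norm ((T ^^ n) (x - T x)) \<le> D * norm x * q^n"
  using order_trans[OF norm_pow_diff_le mult_right_mono[OF diff_norm_le norm_ge_zero]]
  by (simp add: mult_ac)

lemma summable_geometric_rate: "summable (\<lambda>n. c * q^n)"
  using rate by (intro summable_mult summable_geometric) simp

lemma summable_pow_diff: "summable (\<lambda>n. (T ^^ n) (x - T x))"
  by (rule summable_comparison_test'[OF summable_geometric_rate norm_pow_diff_le_geometric])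

lemma norm_stable_proj_le: "norm (stable_proj x) \<le> D / (1 - q) * norm x"
proof -
  have "norm (stable_proj x) \<le> (\<Sum>n. D * norm x * q^n)"
    unfolding stable_proj_def by (rule norm_suminf_le[OF norm_pow_diff_le_geometric summable_geometric_rate])
  also have "\<dots> = D / (1 - q) * norm x" using rate by (simp add: suminf_mult suminf_geometric)
  finally show ?thesis .
qed

lemma stable_proj_add: "stable_proj (x + y) = stable_proj x + stable_proj y"
proof -
  have "(T ^^ n) ((x + y) - T (x + y)) = (T ^^ n) (x - T x) + (T ^^ n) (y - T y)" for n
    by (simp add: linear_add[OF bounded_linear.linear[OF bounded_linear]] pow_add[symmetric] algebra_simps)
  then show ?thesis
    unfolding stable_proj_def by (simp add: suminf_add[OF summable_pow_diff summable_pow_diff])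
qed

lemma stable_proj_scaleC: "stable_proj (c *\<^sub>C x) = c *\<^sub>C stable_proj x"
  unfolding stable_proj_def
  by (simp add: scaleC pow_scaleC scaleC_diff_right[symmetric] suminf_scaleC[OF summable_pow_diff])

lemma bounded_linear_stable_proj: "bounded_linear stable_proj"
proof (rule bounded_linear_intro[where K="D / (1 - q)"])
  show "stable_proj (r *\<^sub>R x) = r *\<^sub>R stable_proj x" for r x
    by (simp add: scaleR_scaleC stable_proj_scaleC)
  show "norm (stable_proj x) \<le> norm x * (D / (1 - q))" for x
    using norm_stable_proj_le[of x] by (simp add: mult.commute)
qed (rule stable_proj_add)

lemma T_stable_proj: "T (stable_proj x) = stable_proj x - (x - T x)"
proof -
  have "T (stable_proj x) = (\<Sum>n. T ((T ^^ n) (x - T x)))"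
    unfolding stable_proj_def by (rule bounded_linear.suminf[OF bounded_linear summable_pow_diff])
  also have "\<dots> = stable_proj x - (x - T x)"
    using suminf_split_head[OF summable_pow_diff, of x] by (simp add: stable_proj_def)
  finally show ?thesis .
qed

lemma stable_proj_T: "stable_proj (T x) = T (stable_proj x)"
proof -
  have "(T ^^ n) (T x - T (T x)) = T ((T ^^ n) (x - T x))" for n
    by (simp add: linear_diff[OF bounded_linear.linear[OF bounded_linear]] funpow_swap1)
  then have "stable_proj (T x) = (\<Sum>n. T ((T ^^ n) (x - T x)))" by (simp add: stable_proj_def)
  also have "\<dots> = T (stable_proj x)"
    unfolding stable_proj_def by (rule bounded_linear.suminf[OF bounded_linear summable_pow_diff, symmetric])
  finally show ?thesis .
qed

lemma stable_proj_fixed: "T x = x \<Longrightarrow> stable_proj x = 0"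
  by (simp add: stable_proj_def linear_0[OF bounded_linear.linear[OF bounded_linear_pow]])

lemma stable_proj_idem: "stable_proj (stable_proj x) = stable_proj x"
proof -
  have "T (x - stable_proj x) = x - stable_proj x"
    by (simp add: linear_diff[OF bounded_linear.linear[OF bounded_linear]] T_stable_proj)
  then have "stable_proj (x - stable_proj x) = 0" by (rule stable_proj_fixed)
  then show ?thesis by (simp add: linear_diff[OF bounded_linear.linear[OF bounded_linear_stable_proj]])
qed

lemma norm_pow_minus_limit_le: "norm ((T ^^ k) x - (x - stable_proj x)) \<le> D / (1 - q) * q^k * norm x"
proof -
  have "stable_proj x = (\<Sum>n. (T ^^ (n + k)) (x - T x)) + (\<Sum>n<k. (T ^^ n) (x - T x))"
    unfolding stable_proj_def by (rule suminf_split_initial_segment[OF summable_pow_diff])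
  moreover have "x - (T ^^ k) x = (\<Sum>n<k. (T ^^ n) (x - T x))"
    using pow_telescope[of 0 k x] by (simp add: atLeast0LessThan)
  ultimately have "(T ^^ k) x - (x - stable_proj x) = (\<Sum>n. (T ^^ (n + k)) (x - T x))"
    by (simp add: algebra_simps)
  moreover have "norm ((T ^^ (n + k)) (x - T x)) \<le> (D * norm x * q^k) * q^n" for n
    using norm_pow_diff_le_geometric[of "n + k" x] by (simp add: power_add mult_ac)
  then have "norm (\<Sum>n. (T ^^ (n + k)) (x - T x)) \<le> (\<Sum>n. (D * norm x * q^k) * q^n)"
    by (rule norm_suminf_le[OF _ summable_geometric_rate])
  moreover have "(\<Sum>n. (D * norm x * q^k) * q^n) = D / (1 - q) * q^k * norm x"
    using rate by (simp add: suminf_mult suminf_geometric)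
  ultimately show ?thesis by simp
qed

lemma fixed_stable_decomposition:
  "\<exists>X0 X1. closed X0 \<and> csubspace X0 \<and> T ` X0 \<subseteq> X0
     \<and> closed X1 \<and> csubspace X1 \<and> T ` X1 \<subseteq> X1
     \<and> X0 \<subseteq> Fix T
     \<and> spectral_radius_on X1 T < 1
     \<and> X0 \<inter> X1 = {0} \<and> (\<forall>x. \<exists>x0\<in>X0. \<exists>x1\<in>X1. x = x0 + x1)"
proof (intro exI conjI)
  define X1 where "X1 = {x. stable_proj x = x}"
  have linear_T: "linear T" by (rule bounded_linear.linear[OF bounded_linear])
  have linear_proj: "linear stable_proj" by (rule bounded_linear.linear[OF bounded_linear_stable_proj])
  show "closed (Fix T)" unfolding Fix_def
    by (intro closed_Collect_eq linear_continuous_on[OF bounded_linear] continuous_on_id)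
  show "csubspace (Fix T)" unfolding Fix_def csubspace_def
    by (simp add: linear_0[OF linear_T] linear_add[OF linear_T] scaleC)
  show "T ` Fix T \<subseteq> Fix T" "Fix T \<subseteq> Fix T" by (auto simp: Fix_def)
  show "closed X1" unfolding X1_def
    by (intro closed_Collect_eq linear_continuous_on[OF bounded_linear_stable_proj] continuous_on_id)
  show "csubspace X1" unfolding X1_def csubspace_def
    by (simp add: linear_0[OF linear_proj] stable_proj_add stable_proj_scaleC)
  show "T ` X1 \<subseteq> X1" by (auto simp: X1_def stable_proj_T)
  have "spectral_radius_on X1 T \<le> q"
  proof (rule spectral_radius_on_le_decay_rate[OF \<open>csubspace X1\<close> \<open>closed X1\<close> \<open>T ` X1 \<subseteq> X1\<close>])
    show "norm ((T ^^ k) y) \<le> D / (1 - q) * q^k * norm y" if "y \<in> X1" for y k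
      using norm_pow_minus_limit_le[of k y] that by (simp add: X1_def)
  qed (use rate in simp)
  then show "spectral_radius_on X1 T < 1" using rate by simp
  show "Fix T \<inter> X1 = {0}"
    using stable_proj_fixed by (auto simp: Fix_def X1_def linear_0[OF linear_T] linear_0[OF linear_proj])
  show "\<forall>x. \<exists>x0\<in>Fix T. \<exists>x1\<in>X1. x = x0 + x1"
  proof
    fix x
    have "T (x - stable_proj x) = x - stable_proj x"
      by (simp add: linear_diff[OF linear_T] T_stable_proj)
    then show "\<exists>x0\<in>Fix T. \<exists>x1\<in>X1. x = x0 + x1"
      by (intro bexI[of _ "x - stable_proj x"] bexI[of _ "stable_proj x"])
        (auto simp: Fix_def X1_def stable_proj_idem)
  qed
qed

end

theorem theorem2p1:
  fixes T :: "'a::{complex_normed_vector, banach} \<Rightarrow> 'a"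
  assumes "bounded_clinear T"
    and "power_bounded T"
    and "spectrum T \<inter> sphere 0 1 = {1}"
  shows "limsup (\<lambda>n. ereal (real n * onorm ((T ^^ n) \<circ> (\<lambda>x. x - T x)))) > 0
     \<or> (\<exists>X0 X1. closed X0 \<and> csubspace X0 \<and> T ` X0 \<subseteq> X0
          \<and> closed X1 \<and> csubspace X1 \<and> T ` X1 \<subseteq> X1
          \<and> X0 \<subseteq> Fix T
          \<and> spectral_radius_on X1 T < 1
          \<and> X0 \<inter> X1 = {0} \<and> (\<forall>x. \<exists>x0\<in>X0. \<exists>x1\<in>X1. x = x0 + x1))"
proof (cases "limsup (\<lambda>n. ereal (real n * onorm ((T ^^ n) \<circ> (\<lambda>x. x - T x)))) > 0")
  case False
  interpret bounded_clinear_operator T by unfold_locales (rule assms(1))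
  from False have "(\<lambda>n. real n * diff_norm n) \<longlonglongrightarrow> 0"
    by (intro tendsto_zero_if_limsup_nonpos) (auto simp: diff_norm_def diff_norm_nonneg[unfolded diff_norm_def])
  then obtain D q where "0 < q" "q < 1" "\<And>n. diff_norm n \<le> D * q^n"
    using diff_norm_geometric by blast
  then interpret geometric_diff_decay T D q by unfold_locales
  show ?thesis using fixed_stable_decomposition by blast
qed blast

end
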